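(* Let $I$ be a countable index set with nested finite subsets $I_1\subset I_2\subset\cdots$, $\bigcup_nI_n=I$, let $W$ be a compact Hausdorff space, $m:X^{\mathbb{R}}\to C^*(W)$ a sequence measure function, and $p\in\mathbb{N}^*$ a free ultrafilter. Then there exists $w_p\in W$ such that $\mu(\mathbf{x})(p)=m(\mathbf{x})(w_p)$ for all $\mathbf{x}\in X^{\mathbb{R}}$.
   Context: A nonnegative real sequence $\mathbf{x}$ is frame compatible if $0\le x_1\le|I_1|$ and $0\le x_i-x_{i-1}\le|I_i\setminus I_{i-1}|$ for $i\ge 2$; $X$ is the set of these, $X^+=\{c\mathbf{x}:\mathbf{x}\in X,c\ge0\}$, $X^{\mathbb{R}}=\{\mathbf{x}^1-\mathbf{x}^2:\mathbf{x}^j\in X^+\}$. $\mathbf{x}\approx\mathbf{y}$ iff $\lim_n(x_n-y_n)/|I_n|=0$; for nonnegative sequences $\mathbf{y}\leqq\mathbf{x}$ iff $\liminf_n(x_n-y_n)/|I_n|\ge0$. $C^*(W)$: real continuous functions on $W$. A sequence measure function is a linear $m:X^{\mathbb{R}}\to C^*(W)$ with: $m(\mathbf{x})=m(\mathbf{y})$ iff $\mathbf{x}\approx\mathbf{y}$ for $\mathbf{x},\mathbf{y}\in X^{\mathbb{R}}$; $m(\mathbf{x})\le m(\mathbf{y})$ pointwise iff $\mathbf{x}\leqq\mathbf{y}$ for $\mathbf{x},\mathbf{y}\in X^+$; $m(\mathbf{i})=1$ where $\mathbf{i}=(|I_1|,|I_2|,\dots)$. $\mathbb{N}^*$ is the set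 of free ultrafilters on $\mathbb{N}$; for a bounded sequence $\mathbf{y}$, $p\text{-}\lim\mathbf{y}=c$ iff for every $\varepsilon>0$, $\{n:|y_n-c|<\varepsilon\}\in p$. The ultrafilter sequence measure function is $\mu(\mathbf{x})(p)=p\text{-}\lim_n x_n/|I_n|$ for $\mathbf{x}\in X^{\mathbb{R}}$. *)

theory Defs
  imports "HOL-Analysis.Analysis" "HOL-Library.Liminf_Limsup"
begin

text \<open>Sequences are indexed from 0: Is 0 \<subseteq> Is 1 \<subseteq> ... play the role of I_1 \<subseteq> I_2 \<subseteq> ...\<close>

definition frame_compatible :: "(nat \<Rightarrow> 'a set) \<Rightarrow> (nat \<Rightarrow> real) \<Rightarrow> bool" where
  "frame_compatible Is x \<longleftrightarrow>
     (\<forall>n. 0 \<le> x n) \<and> 0 \<le> x 0 \<and> x 0 \<le> real (card (Is 0)) \<and>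
     (\<forall>n. 0 \<le> x (Suc n) - x n \<and> x (Suc n) - x n \<le> real (card (Is (Suc n) - Is n)))"

definition Xset :: "(nat \<Rightarrow> 'a set) \<Rightarrow> (nat \<Rightarrow> real) set" where
  "Xset Is = {x. frame_compatible Is x}"

definition Xplus :: "(nat \<Rightarrow> 'a set) \<Rightarrow> (nat \<Rightarrow> real) set" where
  "Xplus Is = {(\<lambda>n. c * x n) | c x. x \<in> Xset Is \<and> 0 \<le> c}"

definition XR :: "(nat \<Rightarrow> 'a set) \<Rightarrow> (nat \<Rightarrow> real) set" where
  "XR Is = {(\<lambda>n. x1 n - x2 n) | x1 x2. x1 \<in> Xplus Is \<and> x2 \<in> Xplus Is}"

definition seq_approx :: "(nat \<Rightarrow> 'a set) \<Rightarrow> (nat \<Rightarrow> real) \<Rightarrow> (nat \<Rightarrow> real) \<Rightarrow> bool" where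
  "seq_approx Is x y \<longleftrightarrow> (\<lambda>n. (x n - y n) / real (card (Is n))) \<longlonglongrightarrow> 0"

definition seq_leqq :: "(nat \<Rightarrow> 'a set) \<Rightarrow> (nat \<Rightarrow> real) \<Rightarrow> (nat \<Rightarrow> real) \<Rightarrow> bool" where
  "seq_leqq Is y x \<longleftrightarrow>
     liminf (\<lambda>n. ereal ((x n - y n) / real (card (Is n)))) \<ge> 0"

definition iseq :: "(nat \<Rightarrow> 'a set) \<Rightarrow> nat \<Rightarrow> real" where
  "iseq Is = (\<lambda>n. real (card (Is n)))"

text \<open>Sequence measure function with values in C*(W), W the topological space of type 'w;
  elements of C*(W) are represented as continuous functions 'w \<Rightarrow> real.\<close>
definition sequence_measure_function ::
  "(nat \<Rightarrow> 'a set) \<Rightarrow> ((nat \<Rightarrow> real) \<Rightarrow> ('w::topological_space \<Rightarrow> real)) \<Rightarrow> bool" where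
  "sequence_measure_function Is m \<longleftrightarrow>
     (\<forall>x\<in>XR Is. continuous_on UNIV (m x)) \<and>
     (\<forall>x\<in>XR Is. \<forall>y\<in>XR Is. m (\<lambda>n. x n + y n) = (\<lambda>w. m x w + m y w)) \<and>
     (\<forall>x\<in>XR Is. \<forall>c::real. m (\<lambda>n. c * x n) = (\<lambda>w. c * m x w)) \<and>
     (\<forall>x\<in>XR Is. \<forall>y\<in>XR Is. m x = m y \<longleftrightarrow> seq_approx Is x y) \<and>
     (\<forall>x\<in>Xplus Is. \<forall>y\<in>Xplus Is. (\<forall>w. m x w \<le> m y w) \<longleftrightarrow> seq_leqq Is x y) \<and>
     m (iseq Is) = (\<lambda>w. 1)"

definition free_ultrafilter :: "nat filter \<Rightarrow> bool" where
  "free_ultrafilter p \<longleftrightarrow>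
     p \<noteq> bot \<and>
     (\<forall>P. eventually P p \<or> eventually (\<lambda>n. \<not> P n) p) \<and>
     (\<forall>k. \<not> eventually (\<lambda>n. n = k) p)"

definition plim_eq :: "nat filter \<Rightarrow> (nat \<Rightarrow> real) \<Rightarrow> real \<Rightarrow> bool" where
  "plim_eq p y c \<longleftrightarrow> (\<forall>\<epsilon>>0. eventually (\<lambda>n. \<bar>y n - c\<bar> < \<epsilon>) p)"

definition ultra_mu :: "(nat \<Rightarrow> 'a set) \<Rightarrow> (nat \<Rightarrow> real) \<Rightarrow> nat filter \<Rightarrow> real" where
  "ultra_mu Is x p = (THE c. plim_eq p (\<lambda>n. x n / real (card (Is n))) c)"

end

theory Submission
  imports Defs
begin

text \<open>X^R is exactly the set of sequences x with |x_0| \<le> C |I_0| and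
  |x_{n+1} - x_n| \<le> C |I_{n+1} - I_n| for some C, so it is a vector lattice and x_n/|I_n| is
  bounded; hence \<mu>(x)(p) is the limit of x_n/|I_n| along p. The sets
  F_x = {w. m x w = \<mu>(x)(p)} are closed, so by compactness of W it suffices that finitely many
  of them, F_x for x in C, meet. Otherwise y = \<Sum>x\<in>C. |x - \<mu>(x)(p) i| lies in X^R and
  has m y > 0, hence m y \<ge> d > 0 on the compact W. The order axiom of m then gives
  liminf y_n/|I_n| \<ge> d, whereas the p-limit of y_n/|I_n| is \<Sum>x\<in>C. |\<mu>(x)(p) - \<mu>(x)(p)| = 0.\<close>

definition bounded_increments :: "(nat \<Rightarrow> 'a set) \<Rightarrow> real \<Rightarrow> (nat \<Rightarrow> real) \<Rightarrow> bool" where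
  "bounded_increments Is C x \<longleftrightarrow> \<bar>x 0\<bar> \<le> C * real (card (Is 0)) \<and>
     (\<forall>n. \<bar>x (Suc n) - x n\<bar> \<le> C * real (card (Is (Suc n) - Is n)))"

lemma bounded_increments_add:
  assumes x: "bounded_increments Is C x" and y: "bounded_increments Is D y"
  shows "bounded_increments Is (C + D) (\<lambda>n. x n + y n)"
  unfolding bounded_increments_def distrib_right
proof (intro conjI allI)
  show "\<bar>x 0 + y 0\<bar> \<le> C * real (card (Is 0)) + D * real (card (Is 0))"
    using x y abs_triangle_ineq[of "x 0" "y 0"] unfolding bounded_increments_def by linarith
  fix n
  have "x (Suc n) + y (Suc n) - (x n + y n) = (x (Suc n) - x n) + (y (Suc n) - y n)" by simp
  then have "\<bar>x (Suc n) + y (Suc n) - (x n + y n)\<bar> \<le> \<bar>x (Suc n) - x n\<bar> + \<bar>y (Suc n) - y n\<bar>"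
    by (metis abs_triangle_ineq)
  moreover have "\<bar>x (Suc n) - x n\<bar> \<le> C * real (card (Is (Suc n) - Is n))"
    "\<bar>y (Suc n) - y n\<bar> \<le> D * real (card (Is (Suc n) - Is n))"
    using x y unfolding bounded_increments_def by blast+
  ultimately show "\<bar>x (Suc n) + y (Suc n) - (x n + y n)\<bar>
      \<le> C * real (card (Is (Suc n) - Is n)) + D * real (card (Is (Suc n) - Is n))"
    by linarith
qed

lemma bounded_increments_scale:
  "bounded_increments Is C x \<Longrightarrow> bounded_increments Is (\<bar>c\<bar> * C) (\<lambda>n. c * x n)"
  unfolding bounded_increments_def
  by (auto simp: abs_mult mult.assoc simp flip: right_diff_distrib intro!: mult_left_mono)

lemma bounded_increments_abs:
  "bounded_increments Is C x \<Longrightarrow> bounded_increments Is C (\<lambda>n. \<bar>x n\<bar>)"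
  unfolding bounded_increments_def by (auto intro: order_trans[OF abs_triangle_ineq3])

lemma bounded_increments_mono:
  assumes x: "bounded_increments Is C x" and "C \<le> D"
  shows "bounded_increments Is D x"
proof -
  have le: "C * real k \<le> D * real k" for k
    using \<open>C \<le> D\<close> by (simp add: mult_right_mono)
  show ?thesis
    unfolding bounded_increments_def
  proof (intro conjI allI)
    show "\<bar>x 0\<bar> \<le> D * real (card (Is 0))"
      using x le[of "card (Is 0)"] unfolding bounded_increments_def by linarith
    show "\<bar>x (Suc n) - x n\<bar> \<le> D * real (card (Is (Suc n) - Is n))" for n
      using x le[of "card (Is (Suc n) - Is n)"] unfolding bounded_increments_def
      by (meson dual_order.trans)
  qed
qed

lemma frame_compatible_scale_Xplus:
  "frame_compatible Is x \<Longrightarrow> 0 \<le> c \<Longrightarrow> (\<lambda>n. c * x n) \<in> Xplus Is"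
  unfolding Xplus_def Xset_def by blast

lemma Xplus_diff_XR: "a \<in> Xplus Is \<Longrightarrow> b \<in> Xplus Is \<Longrightarrow> (\<lambda>n. a n - b n) \<in> XR Is"
  unfolding XR_def by blast

lemma Xplus_bounded_increments:
  assumes "x \<in> Xplus Is" shows "\<exists>C. bounded_increments Is C x"
proof -
  obtain c y where x: "x = (\<lambda>n. c * y n)" and y: "frame_compatible Is y" and "0 \<le> c"
    using assms unfolding Xplus_def Xset_def by auto
  then have "bounded_increments Is c x"
    unfolding bounded_increments_def frame_compatible_def
    by (auto simp: abs_mult simp flip: right_diff_distrib intro!: mult_left_mono)
  then show ?thesis by blast
qed

lemma XR_bounded_increments:
  assumes "x \<in> XR Is" shows "\<exists>C. bounded_increments Is C x"
proof -
  obtain a b where "x = (\<lambda>n. a n - b n)" "a \<in> Xplus Is" "b \<in> Xplus Is"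
    using assms unfolding XR_def by auto
  moreover obtain A B where "bounded_increments Is A a" "bounded_increments Is B b"
    using Xplus_bounded_increments \<open>a \<in> Xplus Is\<close> \<open>b \<in> Xplus Is\<close> by blast
  then have "bounded_increments Is (A + \<bar>-1\<bar> * B) (\<lambda>n. a n + (-1) * b n)"
    by (intro bounded_increments_add bounded_increments_scale)
  ultimately show ?thesis by auto
qed

locale nested_frame =
  fixes Is :: "nat \<Rightarrow> 'a set"
  assumes finite_frame: "\<And>n. finite (Is n)"
    and frame_Suc_mono: "\<And>n. Is n \<subseteq> Is (Suc n)"
begin

lemma card_frame_Suc:
  "real (card (Is (Suc n))) = real (card (Is n)) + real (card (Is (Suc n) - Is n))"
  using finite_frame frame_Suc_mono
  by (simp add: card_Diff_subset card_mono of_nat_diff)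

lemma frame_compatible_iseq: "frame_compatible Is (iseq Is)"
  unfolding frame_compatible_def iseq_def using card_frame_Suc by simp

lemma bounded_increments_iseq: "bounded_increments Is 1 (iseq Is)"
  unfolding bounded_increments_def iseq_def using card_frame_Suc by simp

lemma bounded_increments_abs_le:
  assumes "bounded_increments Is C x" shows "\<bar>x n\<bar> \<le> C * real (card (Is n))"
proof (induction n)
  case 0
  then show ?case using assms by (simp add: bounded_increments_def)
next
  case (Suc n)
  have "\<bar>x (Suc n)\<bar> \<le> \<bar>x n\<bar> + \<bar>x (Suc n) - x n\<bar>" by linarith
  also have "\<dots> \<le> C * real (card (Is n)) + C * real (card (Is (Suc n) - Is n))"
    using Suc assms by (intro add_mono) (auto simp: bounded_increments_def)
  also have "\<dots> = C * real (card (Is (Suc n)))"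
    by (simp add: card_frame_Suc distrib_left)
  finally show ?case .
qed

lemma frame_compatible_shift:
  assumes D: "0 < D" and x: "bounded_increments Is D x"
  shows "frame_compatible Is (\<lambda>n. (x n + D * real (card (Is n))) / (2 * D))"
    (is "frame_compatible Is ?a")
proof -
  have start: "0 \<le> ?a 0 \<and> ?a 0 \<le> real (card (Is 0))"
    using x D unfolding bounded_increments_def by (auto simp: field_simps abs_le_iff)
  have step: "0 \<le> ?a (Suc n) - ?a n \<and> ?a (Suc n) - ?a n \<le> real (card (Is (Suc n) - Is n))" for n
  proof -
    define k where "k = real (card (Is (Suc n) - Is n))"
    have "\<bar>x (Suc n) - x n\<bar> \<le> D * k" using x by (simp add: bounded_increments_def k_def)
    then have "0 \<le> x (Suc n) - x n + D * k" "x (Suc n) - x n + D * k \<le> k * (2 * D)"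
      by (auto simp: abs_le_iff)
    moreover have "?a (Suc n) - ?a n = (x (Suc n) - x n + D * k) / (2 * D)"
      using D by (simp add: card_frame_Suc k_def field_simps)
    ultimately show ?thesis using D by (simp add: k_def pos_divide_le_eq)
  qed
  have nonneg: "0 \<le> ?a n" for n
  proof (induction n)
    case (Suc n)
    then show ?case using step[of n] by linarith
  qed (use start in blast)
  show ?thesis
    unfolding frame_compatible_def
    by (intro conjI allI nonneg start[THEN conjunct1] start[THEN conjunct2]
        step[THEN conjunct1] step[THEN conjunct2])
qed

lemma bounded_increments_imp_XR:
  assumes "bounded_increments Is C x" shows "x \<in> XR Is"
proof -
  define D where "D = \<bar>C\<bar> + 1"
  have D: "0 < D" by (simp add: D_def)
  have "bounded_increments Is D x"
    using assms by (rule bounded_increments_mono) (simp add: D_def)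
  define a where "a = (\<lambda>n. (x n + D * real (card (Is n))) / (2 * D))"
  have "(\<lambda>n. (2 * D) * a n) \<in> Xplus Is"
    using frame_compatible_shift[OF D \<open>bounded_increments Is D x\<close>] D
    unfolding a_def[symmetric] by (intro frame_compatible_scale_Xplus) simp_all
  moreover have "(\<lambda>n. D * iseq Is n) \<in> Xplus Is"
    using frame_compatible_iseq D by (intro frame_compatible_scale_Xplus) simp_all
  moreover have "x = (\<lambda>n. (2 * D) * a n - D * iseq Is n)"
    using D by (auto simp: a_def iseq_def field_simps)
  ultimately show ?thesis by (simp add: Xplus_diff_XR)
qed

lemma XR_iff_bounded_increments: "x \<in> XR Is \<longleftrightarrow> (\<exists>C. bounded_increments Is C x)"
  using XR_bounded_increments bounded_increments_imp_XR by blast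

lemma XR_add: "x \<in> XR Is \<Longrightarrow> y \<in> XR Is \<Longrightarrow> (\<lambda>n. x n + y n) \<in> XR Is"
  unfolding XR_iff_bounded_increments by (blast intro: bounded_increments_add)

lemma XR_scale: "x \<in> XR Is \<Longrightarrow> (\<lambda>n. c * x n) \<in> XR Is"
  unfolding XR_iff_bounded_increments by (blast intro: bounded_increments_scale)

lemma XR_abs: "x \<in> XR Is \<Longrightarrow> (\<lambda>n. \<bar>x n\<bar>) \<in> XR Is"
  unfolding XR_iff_bounded_increments by (blast intro: bounded_increments_abs)

lemma XR_diff: "x \<in> XR Is \<Longrightarrow> y \<in> XR Is \<Longrightarrow> (\<lambda>n. x n - y n) \<in> XR Is"
  using XR_add[of x "\<lambda>n. (-1) * y n"] XR_scale[of y "-1"] by simp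

lemma XR_sum:
  "finite C \<Longrightarrow> (\<And>x. x \<in> C \<Longrightarrow> f x \<in> XR Is) \<Longrightarrow> (\<lambda>n. \<Sum>x\<in>C. f x n) \<in> XR Is"
proof (induction C rule: finite_induct)
  case empty
  have "bounded_increments Is 0 (\<lambda>n. 0)" by (simp add: bounded_increments_def)
  then show ?case unfolding sum.empty XR_iff_bounded_increments by blast
next
  case (insert a C)
  then show ?case using XR_add[of "f a" "\<lambda>n. \<Sum>x\<in>C. f x n"] by simp
qed

lemma iseq_in_XR: "iseq Is \<in> XR Is"
  using bounded_increments_iseq by (rule bounded_increments_imp_XR)

lemma Xplus_subset_XR: "Xplus Is \<subseteq> XR Is"
  using Xplus_bounded_increments bounded_increments_imp_XR by blast

lemma XR_ratio_bounded:
  assumes "x \<in> XR Is" shows "\<exists>B. \<forall>n. \<bar>x n / real (card (Is n))\<bar> \<le> B"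
proof -
  obtain C where C: "bounded_increments Is C x" using assms XR_iff_bounded_increments by blast
  have "\<bar>x n / real (card (Is n))\<bar> \<le> \<bar>C\<bar>" for n
  proof (cases "card (Is n) = 0")
    case False
    then have "\<bar>x n / real (card (Is n))\<bar> \<le> C"
      using bounded_increments_abs_le[OF C, of n] by (simp add: abs_div pos_divide_le_eq)
    then show ?thesis by linarith
  qed simp
  then show ?thesis by blast
qed

end

lemma plim_eq_iff_tendsto: "plim_eq F y c \<longleftrightarrow> (y \<longlongrightarrow> c) F"
  unfolding plim_eq_def tendsto_iff dist_real_def ..

lemma free_ultrafilter_le_sequentially:
  assumes p: "free_ultrafilter p" shows "p \<le> sequentially"
proof (rule filter_leI)
  fix P assume "eventually P sequentially"
  then obtain N where N: "\<And>n. N \<le> n \<Longrightarrow> P n" by (auto simp: eventually_sequentially)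
  have "\<forall>k\<in>{..<N}. eventually (\<lambda>n. n \<noteq> k) p"
    using p unfolding free_ultrafilter_def by blast
  then have "eventually (\<lambda>n. \<forall>k\<in>{..<N}. n \<noteq> k) p"
    by (rule eventually_ball_finite[rotated]) simp
  then show "eventually P p"
    by (rule eventually_mono) (use N not_less in blast)
qed

lemma ultrafilter_tendsto_bounded:
  fixes r :: "'b \<Rightarrow> real"
  assumes F: "F \<noteq> bot" and ultra: "\<And>P. eventually P F \<or> eventually (\<lambda>x. \<not> P x) F"
    and B: "\<And>x. \<bar>r x\<bar> \<le> B"
  shows "\<exists>c. (r \<longlongrightarrow> c) F"
proof -
  have "filtermap r F \<noteq> bot" using F by (simp add: filtermap_bot_iff)
  moreover have "r x \<in> {-B..B}" for x
    using B[of x] by (auto simp: abs_le_iff)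
  then have "eventually (\<lambda>y. y \<in> {-B..B}) (filtermap r F)"
    by (simp add: eventually_filtermap)
  ultimately obtain c where c: "inf (nhds c) (filtermap r F) \<noteq> bot"
    using compact_filter[THEN iffD1, OF compact_Icc] by blast
  have "(r \<longlongrightarrow> c) F"
    unfolding tendsto_def
  proof (intro allI impI)
    fix S assume "open S" "c \<in> S"
    show "eventually (\<lambda>x. r x \<in> S) F"
    proof (rule ccontr)
      assume "\<not> eventually (\<lambda>x. r x \<in> S) F"
      then have "eventually (\<lambda>y. y \<notin> S) (filtermap r F)"
        using ultra by (simp add: eventually_filtermap) blast
      moreover have "eventually (\<lambda>y. y \<in> S) (nhds c)"
        using \<open>open S\<close> \<open>c \<in> S\<close> eventually_nhds by blast
      ultimately have "eventually (\<lambda>_. False) (inf (nhds c) (filtermap r F))"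
        unfolding eventually_inf by blast
      with c show False by (simp add: eventually_False)
    qed
  qed
  then show ?thesis by blast
qed

lemma ultra_mu_tendsto:
  assumes p: "free_ultrafilter p" and B: "\<And>n. \<bar>x n / real (card (Is n))\<bar> \<le> B"
  shows "((\<lambda>n. x n / real (card (Is n))) \<longlongrightarrow> ultra_mu Is x p) p"
proof -
  have "p \<noteq> bot" and ultra: "\<And>P. eventually P p \<or> eventually (\<lambda>n. \<not> P n) p"
    using p by (auto simp: free_ultrafilter_def)
  obtain c where c: "((\<lambda>n. x n / real (card (Is n))) \<longlongrightarrow> c) p"
    using ultrafilter_tendsto_bounded[OF \<open>p \<noteq> bot\<close> ultra,
        of "\<lambda>n. x n / real (card (Is n))", OF B]
    by blast
  have "ultra_mu Is x p = Lim p (\<lambda>n. x n / real (card (Is n)))"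
    unfolding ultra_mu_def plim_eq_iff_tendsto by (simp add: t2_space_class.Lim_def)
  also have "\<dots> = c" using c \<open>p \<noteq> bot\<close> by (intro tendsto_Lim) simp_all
  finally show ?thesis using c by simp
qed

locale sequence_measure = nested_frame Is
  for Is :: "nat \<Rightarrow> 'a set" +
  fixes m :: "(nat \<Rightarrow> real) \<Rightarrow> 'w::topological_space \<Rightarrow> real"
  assumes measure_function: "sequence_measure_function Is m"
begin

lemma continuous_m: "x \<in> XR Is \<Longrightarrow> continuous_on UNIV (m x)"
  using measure_function by (simp add: sequence_measure_function_def)

lemma m_add: "x \<in> XR Is \<Longrightarrow> y \<in> XR Is \<Longrightarrow> m (\<lambda>n. x n + y n) w = m x w + m y w"
  using measure_function by (simp add: sequence_measure_function_def)

lemma m_scale: "x \<in> XR Is \<Longrightarrow> m (\<lambda>n. c * x n) w = c * m x w"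
  using measure_function by (simp add: sequence_measure_function_def)

lemma m_iseq: "m (iseq Is) w = 1"
  using measure_function by (simp add: sequence_measure_function_def)

lemma m_diff: "x \<in> XR Is \<Longrightarrow> y \<in> XR Is \<Longrightarrow> m (\<lambda>n. x n - y n) w = m x w - m y w"
  using m_add[of x "\<lambda>n. (-1) * y n"] m_scale[of y "-1"] XR_scale[of y "-1"] by simp

lemma m_nonneg_iff_liminf:
  assumes "x \<in> XR Is"
  shows "(\<forall>w. 0 \<le> m x w) \<longleftrightarrow> 0 \<le> liminf (\<lambda>n. ereal (x n / real (card (Is n))))"
proof -
  obtain a b where x: "x = (\<lambda>n. a n - b n)" and ab: "a \<in> Xplus Is" "b \<in> Xplus Is"
    using assms unfolding XR_def by auto
  have "m x w = m a w - m b w" for w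
    using m_diff ab Xplus_subset_XR unfolding x by blast
  then have "(\<forall>w. 0 \<le> m x w) \<longleftrightarrow> (\<forall>w. m b w \<le> m a w)" by simp
  also have "\<dots> \<longleftrightarrow> seq_leqq Is b a"
    using measure_function ab by (simp add: sequence_measure_function_def)
  finally show ?thesis by (simp add: seq_leqq_def x)
qed

lemma m_mono:
  assumes "x \<in> XR Is" "y \<in> XR Is" "\<And>n. x n \<le> y n" shows "m x w \<le> m y w"
proof -
  have "0 \<le> liminf (\<lambda>n. ereal ((y n - x n) / real (card (Is n))))"
    using assms(3) by (intro Liminf_bounded always_eventually) simp
  then have "0 \<le> m (\<lambda>n. y n - x n) w"
    using m_nonneg_iff_liminf[of "\<lambda>n. y n - x n"] XR_diff assms(1,2) by blast
  then show ?thesis using m_diff assms(1,2) by simp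
qed

lemma abs_m_le_m_abs:
  assumes x: "x \<in> XR Is" shows "\<bar>m x w\<bar> \<le> m (\<lambda>n. \<bar>x n\<bar>) w"
proof -
  have "m x w \<le> m (\<lambda>n. \<bar>x n\<bar>) w"
    using x XR_abs[OF x] by (intro m_mono) simp_all
  moreover have "m (\<lambda>n. (-1) * x n) w \<le> m (\<lambda>n. \<bar>x n\<bar>) w"
    using XR_abs[OF x] XR_scale[OF x, of "-1"] by (intro m_mono) simp_all
  ultimately show ?thesis using m_scale[OF x, of "-1"] by simp
qed

text \<open>No nonemptiness hypothesis is needed: if every I_n were empty, i would be 0 and m i = 0.\<close>
lemma eventually_card_frame_pos: "eventually (\<lambda>n. 0 < card (Is n)) sequentially"
proof -
  have "\<exists>N. Is N \<noteq> {}"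
  proof (rule ccontr)
    assume "\<nexists>N. Is N \<noteq> {}"
    then have "iseq Is = (\<lambda>n. 0 * iseq Is n)" by (simp add: iseq_def)
    then have "m (iseq Is) w = 0" for w :: 'w using m_scale[OF iseq_in_XR, of 0] by simp
    then show False using m_iseq by simp
  qed
  then obtain N where N: "Is N \<noteq> {}" by blast
  have "0 < card (Is n)" if "N \<le> n" for n
    using lift_Suc_mono_le[of Is, OF frame_Suc_mono that] N finite_frame[of n]
    by (auto simp: card_gt_0_iff)
  then show ?thesis by (auto simp: eventually_sequentially)
qed

lemma ultra_mu_tendsto_XR:
  "free_ultrafilter p \<Longrightarrow> x \<in> XR Is \<Longrightarrow>
    ((\<lambda>n. x n / real (card (Is n))) \<longlongrightarrow> ultra_mu Is x p) p"
  using XR_ratio_bounded ultra_mu_tendsto by blast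

lemma m_pos_imp_eventually_ratio_gt:
  assumes W: "compact (UNIV :: 'w set)" and y: "y \<in> XR Is" and pos: "\<And>w. 0 < m y w"
  shows "\<exists>d>0. eventually (\<lambda>n. d < y n / real (card (Is n))) sequentially"
proof -
  obtain w0 where w0: "\<And>w. m y w0 \<le> m y w"
    using continuous_attains_inf[OF W _ continuous_m[OF y]] by auto
  define d where "d = m y w0"
  have "0 < d" using pos by (simp add: d_def)
  define v where "v = (\<lambda>n. y n - d * iseq Is n)"
  have v: "v \<in> XR Is"
    unfolding v_def using y iseq_in_XR by (intro XR_diff XR_scale)
  have "m v w = m y w - d" for w
    unfolding v_def using m_diff[OF y XR_scale[OF iseq_in_XR]] m_scale[OF iseq_in_XR] m_iseq by simp
  then have "\<forall>w. 0 \<le> m v w" using w0 d_def by simp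
  then have "ereal (- d / 2) < liminf (\<lambda>n. ereal (v n / real (card (Is n))))"
    using m_nonneg_iff_liminf[OF v] \<open>0 < d\<close> by (simp add: order_less_le_trans[of _ 0])
  then have "eventually (\<lambda>n. - d / 2 < v n / real (card (Is n))) sequentially"
    by (auto dest: less_LiminfD elim: eventually_mono)
  then have "eventually (\<lambda>n. d / 2 < y n / real (card (Is n))) sequentially"
    using eventually_card_frame_pos
    by eventually_elim (simp add: v_def iseq_def field_simps)
  then show ?thesis using \<open>0 < d\<close> by (intro exI[of _ "d / 2"]) simp
qed

lemma ultra_mu_deviation_tendsto_0:
  assumes p: "free_ultrafilter p" and x: "x \<in> XR Is"
  shows "((\<lambda>n. \<bar>x n - ultra_mu Is x p * iseq Is n\<bar> / real (card (Is n))) \<longlongrightarrow> 0) p"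
proof -
  define \<mu> where "\<mu> = ultra_mu Is x p"
  have "((\<lambda>n. \<bar>x n / real (card (Is n)) - \<mu>\<bar>) \<longlongrightarrow> \<bar>\<mu> - \<mu>\<bar>) p"
    unfolding \<mu>_def by (intro tendsto_rabs tendsto_diff tendsto_const ultra_mu_tendsto_XR p x)
  moreover have "eventually (\<lambda>n. \<bar>x n - \<mu> * iseq Is n\<bar> / real (card (Is n)) =
      \<bar>x n / real (card (Is n)) - \<mu>\<bar>) p"
    using filter_leD[OF free_ultrafilter_le_sequentially[OF p] eventually_card_frame_pos]
  proof (rule eventually_mono)
    fix n assume "0 < card (Is n)"
    then have "x n / real (card (Is n)) - \<mu> = (x n - \<mu> * real (card (Is n))) / real (card (Is n))"
      by (simp add: field_simps)
    then show "\<bar>x n - \<mu> * iseq Is n\<bar> / real (card (Is n)) = \<bar>x n / real (card (Is n)) - \<mu>\<bar>"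
      by (simp add: iseq_def abs_div)
  qed
  ultimately show ?thesis by (simp add: tendsto_cong \<mu>_def)
qed

lemma ultra_mu_agrees_on_finite:
  assumes W: "compact (UNIV :: 'w set)" and p: "free_ultrafilter p"
    and C: "finite C" "C \<subseteq> XR Is"
  shows "\<exists>w. \<forall>x\<in>C. m x w = ultra_mu Is x p"
proof (rule ccontr)
  assume none: "\<nexists>w. \<forall>x\<in>C. m x w = ultra_mu Is x p"
  define z where "z x = (\<lambda>n. x n - ultra_mu Is x p * iseq Is n)" for x
  define y where "y = (\<lambda>n. \<Sum>x\<in>C. \<bar>z x n\<bar>)"
  have z: "z x \<in> XR Is" and mz: "m (z x) w = m x w - ultra_mu Is x p" if "x \<in> C" for x w
    using that C(2) m_diff[OF _ XR_scale[OF iseq_in_XR]] m_scale[OF iseq_in_XR] m_iseq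
    unfolding z_def by (auto intro!: XR_diff XR_scale iseq_in_XR)
  have y: "y \<in> XR Is"
    unfolding y_def using C(1) z by (intro XR_sum XR_abs)
  have "0 < m y w" for w
  proof -
    obtain x where x: "x \<in> C" "m x w \<noteq> ultra_mu Is x p" using none by blast
    have "0 < \<bar>m (z x) w\<bar>" using mz x by simp
    also have "\<dots> \<le> m (\<lambda>n. \<bar>z x n\<bar>) w" by (rule abs_m_le_m_abs[OF z[OF x(1)]])
    also have "\<dots> \<le> m y w"
      using x(1) C(1) by (intro m_mono XR_abs z y) (auto simp: y_def intro: member_le_sum)
    finally show ?thesis .
  qed
  then obtain d where "0 < d" and d: "eventually (\<lambda>n. d < y n / real (card (Is n))) sequentially"
    using m_pos_imp_eventually_ratio_gt[OF W y] by blast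
  have "((\<lambda>n. y n / real (card (Is n))) \<longlongrightarrow> 0) p"
    unfolding y_def sum_divide_distrib z_def
    using ultra_mu_deviation_tendsto_0[OF p] C(2) by (intro tendsto_null_sum) blast
  moreover have "eventually (\<lambda>n. d \<le> y n / real (card (Is n))) p"
    using filter_leD[OF free_ultrafilter_le_sequentially[OF p] d] by (rule eventually_mono) simp
  ultimately have "d \<le> 0"
    using p by (intro tendsto_lowerbound) (auto simp: free_ultrafilter_def)
  with \<open>0 < d\<close> show False by simp
qed

end

theorem theorem5p22:
  fixes I :: "'a set" and Is :: "nat \<Rightarrow> 'a set"
    and m :: "(nat \<Rightarrow> real) \<Rightarrow> ('w::t2_space \<Rightarrow> real)" and p :: "nat filter"
  assumes "countable I"
    and "I \<noteq> {}"
    and "\<And>n. finite (Is n)"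
    and "\<And>n. Is n \<subseteq> Is (Suc n)"
    and "(\<Union>n. Is n) = I"
    and "compact (UNIV :: 'w set)"
    and "sequence_measure_function Is m"
    and "free_ultrafilter p"
  shows "\<exists>wp. \<forall>x\<in>XR Is. ultra_mu Is x p = m x wp"
proof -
  interpret sequence_measure Is m
    using assms(3,4,7) by unfold_locales
  have "UNIV \<inter> (\<Inter>x\<in>XR Is. {w. m x w = ultra_mu Is x p}) \<noteq> {}"
  proof (rule compact_imp_fip_image[OF assms(6)])
    show "closed {w. m x w = ultra_mu Is x p}" if "x \<in> XR Is" for x
      using continuous_m[OF that] by (intro closed_Collect_eq continuous_on_const)
    show "UNIV \<inter> (\<Inter>x\<in>C. {w. m x w = ultra_mu Is x p}) \<noteq> {}"
      if "finite C" "C \<subseteq> XR Is" for C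
      using ultra_mu_agrees_on_finite[OF assms(6,8) that] by auto
  qed
  then obtain wp where "\<forall>x\<in>XR Is. m x wp = ultra_mu Is x p" by blast
  then show ?thesis by (intro exI[of _ wp]) simp
qed

end
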